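(* For fixed $N\ge1$, $\omega_1,\dots,\omega_N\in\mathbb{R}$ and $\kappa\ne0$, the system \[ \dot\theta_i=\omega_i-\frac{\kappa}{N}\sum_{j=1}^N(1+\cos\theta_j)\sin\theta_i,\qquad i=1,\dots,N, \] has at most $2^{N+1}$ equilibria that are distinct modulo $2\pi$.
   Context: An equilibrium is $\Theta\in\mathbb{R}^N$ at which all right-hand sides vanish; two equilibria are distinct modulo $2\pi$ if they differ as points of $(\mathbb{R}/2\pi\mathbb{Z})^N$. *)

theory Defs
  imports "HOL-Analysis.Analysis"
begin

text \<open>Right-hand side of the i-th equation, indices i = 0..N-1.\<close>
definition rhs :: "nat \<Rightarrow> (nat \<Rightarrow> real) \<Rightarrow> real \<Rightarrow> (nat \<Rightarrow> real) \<Rightarrow> nat \<Rightarrow> real" where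
  "rhs N \<omega> \<kappa> \<theta> i = \<omega> i - \<kappa> / real N * (\<Sum>j<N. 1 + cos (\<theta> j)) * sin (\<theta> i)"

definition is_equilibrium :: "nat \<Rightarrow> (nat \<Rightarrow> real) \<Rightarrow> real \<Rightarrow> (nat \<Rightarrow> real) \<Rightarrow> bool" where
  "is_equilibrium N \<omega> \<kappa> \<theta> \<longleftrightarrow> (\<forall>i<N. rhs N \<omega> \<kappa> \<theta> i = 0)"

definition cong_2pi :: "nat \<Rightarrow> (nat \<Rightarrow> real) \<Rightarrow> (nat \<Rightarrow> real) \<Rightarrow> bool" where
  "cong_2pi N \<theta> \<phi> \<longleftrightarrow> (\<forall>i<N. \<exists>k::int. \<theta> i - \<phi> i = 2 * pi * of_int k)"

end

(* At an equilibrium put R = (kappa/N) * sum_j (1 + cos theta_j) and d_i = R cos theta_i.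
   The equations say omega_i = R sin theta_i, hence d_i^2 = R^2 - omega_i^2 and
   sum_i d_i = R sum_i cos theta_i = N R^2/kappa - N R, and (R, d) determines theta modulo 2 pi
   (if R = 0, every cos theta_i is -1).  So it suffices to count such pairs (R, d).
   Writing d_i = +-sqrt(R^2 - omega_i^2), R is a root of one of the 2^N functions
   F_T(R) = N R^2/kappa - N R - sum_i (+-) sqrt(R^2 - omega_i^2).  Their product is unchanged
   by every single sign flip, hence a polynomial P in R; each factor grows like R^2, so
   deg P <= 2^(N+1).  At a root R0 the solutions d are told apart by their signs on the indices
   with omega_i^2 < R0^2; grouping the factors F_T by these signs gives functions that are
   Lipschitz at R0 and vanish at R0 for every realised sign pattern, so the number of d's
   over R0 is at most the order of R0 as a root of P.  Summing over R0 gives at most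
   deg P <= 2^(N+1) pairs. *)

theory Submission
  imports
    Defs
    "HOL-Computational_Algebra.Polynomial"
    "HOL-Library.Function_Algebras"
    "HOL-Library.Landau_Symbols"
    "HOL-Real_Asymp.Real_Asymp"
begin

section \<open>Products over sign patterns\<close>

definition pattern_sign :: "'i set \<Rightarrow> 'i \<Rightarrow> 'a::ring_1" where
  "pattern_sign T i = (if i \<in> T then -1 else 1)"

definition ring_closed :: "'a::comm_ring_1 set \<Rightarrow> bool" where
  "ring_closed C \<longleftrightarrow> 1 \<in> C \<and> (\<forall>x\<in>C. - x \<in> C) \<and> (\<forall>x\<in>C. \<forall>y\<in>C. x + y \<in> C \<and> x * y \<in> C)"

lemma ring_closedI:
  assumes "1 \<in> C" "\<And>x. x \<in> C \<Longrightarrow> - x \<in> C"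
    and "\<And>x y. x \<in> C \<Longrightarrow> y \<in> C \<Longrightarrow> x + y \<in> C" "\<And>x y. x \<in> C \<Longrightarrow> y \<in> C \<Longrightarrow> x * y \<in> C"
  shows "ring_closed C"
  using assms unfolding ring_closed_def by blast

context
  fixes C :: "'a::comm_ring_1 set"
  assumes C: "ring_closed C"
begin

lemma ring_closed_one: "1 \<in> C"
  and ring_closed_uminus: "x \<in> C \<Longrightarrow> - x \<in> C"
  and ring_closed_add: "x \<in> C \<Longrightarrow> y \<in> C \<Longrightarrow> x + y \<in> C"
  and ring_closed_mult: "x \<in> C \<Longrightarrow> y \<in> C \<Longrightarrow> x * y \<in> C"
  using C unfolding ring_closed_def by blast+

lemma ring_closed_zero: "0 \<in> C"
  using ring_closed_add[OF ring_closed_one ring_closed_uminus[OF ring_closed_one]] by simp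

lemma ring_closed_diff: "x \<in> C \<Longrightarrow> y \<in> C \<Longrightarrow> x - y \<in> C"
  using ring_closed_add ring_closed_uminus by (metis diff_conv_add_uminus)

lemma ring_closed_sum: "(\<And>i. i \<in> A \<Longrightarrow> f i \<in> C) \<Longrightarrow> sum f A \<in> C"
  by (induction A rule: infinite_finite_induct) (auto intro: ring_closed_zero ring_closed_add)

end

definition poly_over :: "'a::zero set \<Rightarrow> 'a poly \<Rightarrow> bool" where
  "poly_over C p \<longleftrightarrow> (\<forall>n. coeff p n \<in> C)"

lemma poly_over_pCons_iff: "poly_over C (pCons a p) \<longleftrightarrow> a \<in> C \<and> poly_over C p"
  unfolding poly_over_def by (metis coeff_pCons_0 coeff_pCons_Suc not0_implies_Suc)

context
  fixes C :: "'a::comm_ring_1 set"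
  assumes C: "ring_closed C"
begin

lemma poly_over_const: "a \<in> C \<Longrightarrow> poly_over C [:a:]"
  using ring_closed_zero[OF C] by (auto simp: poly_over_def coeff_pCons split: nat.split)

lemma poly_over_add: "poly_over C p \<Longrightarrow> poly_over C q \<Longrightarrow> poly_over C (p + q)"
  by (simp add: poly_over_def ring_closed_add[OF C])

lemma poly_over_diff: "poly_over C p \<Longrightarrow> poly_over C q \<Longrightarrow> poly_over C (p - q)"
  by (simp add: poly_over_def ring_closed_diff[OF C])

lemma poly_over_smult: "a \<in> C \<Longrightarrow> poly_over C p \<Longrightarrow> poly_over C (smult a p)"
  by (simp add: poly_over_def ring_closed_mult[OF C])

lemma poly_over_mult: "poly_over C p \<Longrightarrow> poly_over C q \<Longrightarrow> poly_over C (p * q)"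
  by (auto simp: poly_over_def coeff_mult intro!: ring_closed_sum[OF C] ring_closed_mult[OF C])

lemma poly_over_poly: "poly_over C p \<Longrightarrow> x \<in> C \<Longrightarrow> poly p x \<in> C"
proof (induction p)
  case (pCons a p)
  then show ?case
    by (auto simp: poly_over_pCons_iff intro: ring_closed_add[OF C] ring_closed_mult[OF C])
qed (simp add: ring_closed_zero[OF C])

lemma pcompose_shift_split:
  assumes "poly_over C p" "c\<^sup>2 \<in> C"
  shows "\<exists>Ev Od. poly_over C Ev \<and> poly_over C Od \<and>
    pcompose p [:c, 1:] = Ev + smult c Od \<and> pcompose p [:- c, 1:] = Ev - smult c Od"
  using assms(1)
proof (induction p)
  case 0
  show ?case by (intro exI[of _ 0]) (simp add: poly_over_def ring_closed_zero[OF C])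
next
  case (pCons a p)
  have "a \<in> C" "poly_over C p"
    using pCons.prems by (simp_all add: poly_over_pCons_iff)
  then obtain Ev Od where EO: "poly_over C Ev" "poly_over C Od"
    and plus: "pcompose p [:c, 1:] = Ev + smult c Od" and minus: "pcompose p [:- c, 1:] = Ev - smult c Od"
    using pCons.IH by blast
  show ?case
  proof (intro exI conjI)
    show "poly_over C ([:a:] + pCons 0 Ev + smult (c\<^sup>2) Od)"
      using EO assms(2) \<open>a \<in> C\<close> ring_closed_zero[OF C]
      by (intro poly_over_add poly_over_const poly_over_smult) (simp_all add: poly_over_pCons_iff)
    show "poly_over C (Ev + pCons 0 Od)"
      using EO ring_closed_zero[OF C] by (intro poly_over_add) (simp_all add: poly_over_pCons_iff)
    show "pcompose (pCons a p) [:c, 1:] = [:a:] + pCons 0 Ev + smult (c\<^sup>2) Od + smult c (Ev + pCons 0 Od)"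
      unfolding pcompose_pCons plus
      by (simp add: poly_eq_iff coeff_pCons algebra_simps power2_eq_square split: nat.split)
    show "pcompose (pCons a p) [:- c, 1:] = [:a:] + pCons 0 Ev + smult (c\<^sup>2) Od - smult c (Ev + pCons 0 Od)"
      unfolding pcompose_pCons minus
      by (simp add: poly_eq_iff coeff_pCons algebra_simps power2_eq_square split: nat.split)
  qed
qed

lemma poly_over_shift_product:
  assumes "poly_over C p" "c\<^sup>2 \<in> C"
  shows "poly_over C (pcompose p [:c, 1:] * pcompose p [:- c, 1:])"
proof -
  obtain Ev Od where EO: "poly_over C Ev" "poly_over C Od"
    and plus: "pcompose p [:c, 1:] = Ev + smult c Od" and minus: "pcompose p [:- c, 1:] = Ev - smult c Od"
    using pcompose_shift_split[OF assms] by blast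
  have "pcompose p [:c, 1:] * pcompose p [:- c, 1:] = Ev * Ev - smult (c\<^sup>2) (Od * Od)"
    unfolding plus minus by (simp add: algebra_simps power2_eq_square)
  then show ?thesis
    using EO assms(2) by (simp add: poly_over_diff poly_over_mult poly_over_smult)
qed

end

definition sign_poly :: "'i set \<Rightarrow> ('i \<Rightarrow> 'a::comm_ring_1) \<Rightarrow> 'a poly" where
  "sign_poly I c = (\<Prod>T\<in>Pow I. [:- (\<Sum>i\<in>I. pattern_sign T i * c i), 1:])"

lemma poly_sign_poly: "poly (sign_poly I c) y = (\<Prod>T\<in>Pow I. y - (\<Sum>i\<in>I. pattern_sign T i * c i))"
  by (simp add: sign_poly_def poly_prod)

lemma sign_poly_empty: "sign_poly {} c = [:0, 1:]"
  by (simp add: sign_poly_def)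

lemma sign_poly_insert:
  assumes "finite I" "j \<notin> I"
  shows "sign_poly (insert j I) c = pcompose (sign_poly I c) [:c j, 1:] * pcompose (sign_poly I c) [:- c j, 1:]"
proof -
  let ?f = "\<lambda>T. [:- (\<Sum>i\<in>insert j I. pattern_sign T i * c i), 1:]"
  have inj: "inj_on (insert j) (Pow I)"
    using assms(2) by (intro inj_onI) (metis PowD insert_ident subsetD)
  have "sign_poly (insert j I) c = prod ?f (Pow I) * prod ?f (insert j ` Pow I)"
    unfolding sign_poly_def Pow_insert using assms by (intro prod.union_disjoint) auto
  also have "prod ?f (insert j ` Pow I) = pcompose (sign_poly I c) [:c j, 1:]"
    unfolding prod.reindex[OF inj] sign_poly_def pcompose_prod
  proof (intro prod.cong refl)
    fix T assume "T \<in> Pow I"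
    then have "(\<Sum>i\<in>I. pattern_sign (insert j T) i * c i) = (\<Sum>i\<in>I. pattern_sign T i * c i)"
      using assms(2) by (intro sum.cong) (auto simp: pattern_sign_def)
    then show "(?f \<circ> insert j) T = pcompose [:- (\<Sum>i\<in>I. pattern_sign T i * c i), 1:] [:c j, 1:]"
      using assms by (simp add: pattern_sign_def pcompose_pCons)
  qed
  also have "prod ?f (Pow I) = pcompose (sign_poly I c) [:- c j, 1:]"
    unfolding sign_poly_def pcompose_prod
  proof (intro prod.cong refl)
    fix T assume "T \<in> Pow I"
    then have "j \<notin> T" using assms(2) by auto
    then show "?f T = pcompose [:- (\<Sum>i\<in>I. pattern_sign T i * c i), 1:] [:- c j, 1:]"
      using assms by (simp add: pattern_sign_def pcompose_pCons)
  qed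
  finally show ?thesis by (simp only: mult.commute)
qed

text \<open>The factors for \<open>c j\<close> and \<open>- c j\<close> pair up to \<open>p(Y - c j) p(Y + c j) = Ev\<^sup>2 - (c j)\<^sup>2 Od\<^sup>2\<close>,
  in which \<open>c j\<close> occurs only squared.\<close>
lemma poly_over_sign_poly:
  assumes "ring_closed C" "finite I" "\<And>i. i \<in> I \<Longrightarrow> (c i)\<^sup>2 \<in> C"
  shows "poly_over C (sign_poly I c)"
  using assms(2,3)
proof (induction I rule: finite_induct)
  case empty
  then show ?case
    using ring_closed_zero[OF assms(1)] ring_closed_one[OF assms(1)]
    by (simp add: sign_poly_empty poly_over_pCons_iff) (simp add: poly_over_def)
next
  case (insert j I)
  then show ?case
    by (simp add: sign_poly_insert poly_over_shift_product[OF assms(1)])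
qed

lemma sign_product_closed:
  assumes "ring_closed C" "finite I" "\<And>i. i \<in> I \<Longrightarrow> (c i)\<^sup>2 \<in> C" "a \<in> C"
  shows "(\<Prod>T\<in>Pow I. a - (\<Sum>i\<in>I. pattern_sign T i * c i)) \<in> C"
  using poly_over_poly[OF assms(1) poly_over_sign_poly[OF assms(1-3)] assms(4)]
  by (simp add: poly_sign_poly)

lemma pattern_sign_nonzero [simp]: "pattern_sign T i \<noteq> (0 :: 'a::ring_1)"
  by (simp add: pattern_sign_def)

lemma ring_closed_pattern_sign: "ring_closed C \<Longrightarrow> pattern_sign T i \<in> C"
  by (simp add: pattern_sign_def ring_closed_one ring_closed_uminus)

section \<open>Polynomial and pointwise Lipschitz functions of a real variable\<close>

lemma sum_fun_apply: "sum f A x = (\<Sum>a\<in>A. f a x)"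
  by (induction A rule: infinite_finite_induct) auto

lemma prod_fun_apply: "prod f A x = (\<Prod>a\<in>A. f a x)"
  by (induction A rule: infinite_finite_induct) auto

lemma pattern_sign_fun_apply: "pattern_sign T i x = pattern_sign T i"
  by (simp add: pattern_sign_def)

definition poly_functions :: "(real \<Rightarrow> 'a::real_normed_field) set" where
  "poly_functions = range (\<lambda>p x. poly p (of_real x))"

lemma ring_closed_poly_functions: "ring_closed (poly_functions :: (real \<Rightarrow> 'a::real_normed_field) set)"
proof (rule ring_closedI; unfold poly_functions_def)
  have "1 = (\<lambda>x. poly (1 :: 'a poly) (of_real x))"
    by (simp add: one_fun_def)
  then show "1 \<in> range (\<lambda>p x. poly p (of_real x) :: 'a)"
    by (rule range_eqI)
  show "- f \<in> range (\<lambda>p x. poly p (of_real x) :: 'a)" if f: "f \<in> range (\<lambda>p x. poly p (of_real x))" for f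
  proof -
    obtain p where "f = (\<lambda>x. poly p (of_real x))" using f by blast
    then show ?thesis by (intro range_eqI[where x = "- p"]) (simp add: fun_Compl_def)
  qed
  show "f + g \<in> range (\<lambda>p x. poly p (of_real x) :: 'a)" "f * g \<in> range (\<lambda>p x. poly p (of_real x) :: 'a)"
    if fg: "f \<in> range (\<lambda>p x. poly p (of_real x))" "g \<in> range (\<lambda>p x. poly p (of_real x))" for f g
  proof -
    obtain p q where "f = (\<lambda>x. poly p (of_real x))" "g = (\<lambda>x. poly q (of_real x))" using fg by blast
    then show "f + g \<in> range (\<lambda>p x. poly p (of_real x))" "f * g \<in> range (\<lambda>p x. poly p (of_real x))"
      by (auto intro: range_eqI[where x = "p + q"] range_eqI[where x = "p * q"] simp: plus_fun_def times_fun_def)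
  qed
qed

definition lipschitz_at :: "real \<Rightarrow> (real \<Rightarrow> 'a::real_normed_field) \<Rightarrow> bool" where
  "lipschitz_at r f \<longleftrightarrow> (\<lambda>x. f x - f r) \<in> O[at r](\<lambda>x. of_real (x - r))"

lemma of_real_diff_bigo_1: "(\<lambda>x. of_real (x - r) :: 'a::real_normed_field) \<in> O[at r](\<lambda>_. 1)"
  by (rule bigoI_tendsto[where c = 0]) (auto intro!: tendsto_eq_intros)

lemma lipschitz_at_bigo_1:
  assumes "lipschitz_at r f"
  shows "f \<in> O[at r](\<lambda>_. 1)"
proof -
  have "(\<lambda>x. f x - f r) \<in> O[at r](\<lambda>_. 1)"
    using assms of_real_diff_bigo_1 unfolding lipschitz_at_def by (rule landau_o.big_trans)
  then have "(\<lambda>x. (f x - f r) + f r) \<in> O[at r](\<lambda>_. 1)"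
    by (rule sum_in_bigo) (rule bigo_const)
  then show ?thesis by (simp only: diff_add_cancel)
qed

lemma lipschitz_at_bigo_zero:
  "lipschitz_at r f \<Longrightarrow> f r = 0 \<Longrightarrow> f \<in> O[at r](\<lambda>x. of_real (x - r))"
  by (simp add: lipschitz_at_def)

lemma ring_closed_lipschitz_at: "ring_closed {f :: real \<Rightarrow> 'a::real_normed_field. lipschitz_at r f}"
proof (rule ring_closedI; unfold mem_Collect_eq)
  show "lipschitz_at r 1"
    unfolding lipschitz_at_def one_fun_apply diff_self by (rule zero_in_bigo)
  show "lipschitz_at r (- f)" if "lipschitz_at r f" for f
  proof -
    have "(\<lambda>x. - (f x - f r)) \<in> O[at r](\<lambda>x. of_real (x - r))"
      using that unfolding lipschitz_at_def by (simp only: landau_o.big.uminus_in_iff)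
    then show ?thesis unfolding lipschitz_at_def by (simp add: algebra_simps)
  qed
  show "lipschitz_at r (f + g)" if "lipschitz_at r f" "lipschitz_at r g" for f g
  proof -
    have "(\<lambda>x. (f x - f r) + (g x - g r)) \<in> O[at r](\<lambda>x. of_real (x - r))"
      using that unfolding lipschitz_at_def by (rule sum_in_bigo)
    then show ?thesis unfolding lipschitz_at_def by (simp add: algebra_simps)
  qed
  show "lipschitz_at r (f * g)" if "lipschitz_at r f" "lipschitz_at r g" for f g
  proof -
    have "(\<lambda>x. (f x - f r) * g x) \<in> O[at r](\<lambda>x. of_real (x - r) * 1)"
      using that(1) lipschitz_at_bigo_1[OF that(2)] unfolding lipschitz_at_def by (rule landau_o.big.mult)
    moreover have "(\<lambda>x. f r * (g x - g r)) \<in> O[at r](\<lambda>x. 1 * of_real (x - r))"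
      using bigo_const that(2) unfolding lipschitz_at_def by (rule landau_o.big.mult)
    ultimately have "(\<lambda>x. (f x - f r) * g x + f r * (g x - g r)) \<in> O[at r](\<lambda>x. of_real (x - r))"
      by (intro sum_in_bigo) simp_all
    then show ?thesis unfolding lipschitz_at_def by (simp add: algebra_simps)
  qed
qed

lemma lipschitz_at_poly: "lipschitz_at r (\<lambda>x. poly p (of_real x))"
proof (induction p)
  case 0
  show ?case
    using ring_closed_zero[OF ring_closed_lipschitz_at] by (simp add: zero_fun_def)
next
  case (pCons a p)
  have "lipschitz_at r (\<lambda>_. a)"
    by (simp add: lipschitz_at_def)
  moreover have "lipschitz_at r (\<lambda>x. of_real x)"
    by (simp add: lipschitz_at_def flip: of_real_diff)
  ultimately have "(\<lambda>_. a) + (\<lambda>x. of_real x) * (\<lambda>x. poly p (of_real x)) \<in> {f. lipschitz_at r f}"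
    using pCons.IH ring_closed_lipschitz_at
    by (intro ring_closed_add ring_closed_mult) simp_all
  then show ?case by (simp add: plus_fun_def times_fun_def)
qed

lemma norm_csqrt_diff_le:
  assumes "w > 0"
  shows "norm (csqrt z - csqrt (of_real w)) \<le> norm (z - of_real w) / sqrt w"
proof -
  have "sqrt w \<le> Re (csqrt z + csqrt (of_real w))"
    using Re_csqrt[of z] assms by simp
  also have "\<dots> \<le> norm (csqrt z + csqrt (of_real w))"
    by (rule complex_Re_le_cmod)
  finally have "norm (csqrt z - csqrt (of_real w)) * sqrt w
      \<le> norm (csqrt z - csqrt (of_real w)) * norm (csqrt z + csqrt (of_real w))"
    by (simp add: mult_left_mono)
  also have "\<dots> = norm (z - of_real w)"
    using assms by (simp add: algebra_simps power2_eq_square[symmetric] flip: norm_mult of_real_power)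
  finally show ?thesis
    using assms by (simp add: field_simps)
qed

lemma lipschitz_at_csqrt:
  assumes "\<omega>\<^sup>2 < r\<^sup>2"
  shows "lipschitz_at r (\<lambda>x. csqrt (of_real (x\<^sup>2 - \<omega>\<^sup>2)))"
proof -
  define w where "w = r\<^sup>2 - \<omega>\<^sup>2"
  have "w > 0" using assms by (simp add: w_def)
  have "x\<^sup>2 - \<omega>\<^sup>2 - w = (x - r) * (x + r)" for x
    by (simp add: w_def algebra_simps power2_eq_square)
  then have factor: "(\<lambda>x. of_real (x\<^sup>2 - \<omega>\<^sup>2) - of_real w) = (\<lambda>x. of_real (x - r) * (of_real (x + r) :: complex))"
    by (simp flip: of_real_diff of_real_mult of_real_add)
  have "(\<lambda>x. csqrt (of_real (x\<^sup>2 - \<omega>\<^sup>2)) - csqrt (of_real w)) \<in> O[at r](\<lambda>x. of_real (x\<^sup>2 - \<omega>\<^sup>2) - of_real w)"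
    using norm_csqrt_diff_le[OF \<open>w > 0\<close>] by (intro bigoI[of _ "1 / sqrt w"]) simp
  also have "(\<lambda>x. of_real (x\<^sup>2 - \<omega>\<^sup>2) - of_real w) \<in> O[at r](\<lambda>x. of_real (x - r) * (1 :: complex))"
    unfolding factor
    by (intro landau_o.big.mult_left bigoI_tendsto[where c = "of_real (2 * r)"]) (auto intro!: tendsto_eq_intros)
  finally show ?thesis
    by (simp add: lipschitz_at_def w_def)
qed

section \<open>Root orders and degrees from growth bounds\<close>

lemma order_ge_of_bigo:
  fixes P :: "'a::real_normed_field poly"
  assumes "P \<noteq> 0" and bound: "(\<lambda>x. poly P (of_real x)) \<in> O[at r](\<lambda>x. of_real (x - r) ^ m)"
  shows "m \<le> order (of_real r) P"
proof (rule ccontr)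
  define k where "k = order (of_real r) P"
  assume "\<not> m \<le> order (of_real r) P"
  then have "k < m" by (simp add: k_def)
  obtain Q where PQ: "P = [:- of_real r, 1:] ^ k * Q" and "\<not> [:- of_real r, 1:] dvd Q"
    using order_decomp[OF assms(1)] unfolding k_def by blast
  then have "poly Q (of_real r) \<noteq> 0" by (simp add: poly_eq_0_iff_dvd)
  have "\<forall>\<^sub>F x in at r. x \<noteq> r"
    by (simp add: eventually_at_filter)
  then have nonzero: "\<forall>\<^sub>F x in at r. (of_real (x - r) :: 'a) ^ k \<noteq> 0"
    by eventually_elim simp
  have "(\<lambda>x. of_real (x - r) ^ k * poly Q (of_real x))
      \<in> O[at r](\<lambda>x. of_real (x - r) ^ k * (of_real (x - r) :: 'a) ^ (m - k))"
    using bound \<open>k < m\<close> by (simp add: PQ poly_power poly_mult flip: power_add)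
  then have "(\<lambda>x. poly Q (of_real x)) \<in> O[at r](\<lambda>x. (of_real (x - r) :: 'a) ^ (m - k))"
    using landau_o.big.mult_cancel_left[OF bigtheta_refl nonzero] by blast
  moreover have "(\<lambda>x. (of_real (x - r) :: 'a) ^ (m - k)) \<in> o[at r](\<lambda>_. 1)"
    using \<open>k < m\<close> by (intro smalloI_tendsto) (auto intro!: tendsto_eq_intros)
  ultimately have "(\<lambda>x. poly Q (of_real x)) \<in> o[at r](\<lambda>_. 1)"
    by (rule landau_o.big_small_trans)
  then have "((\<lambda>x. poly Q (of_real x)) \<longlongrightarrow> 0) (at r)"
    using smalloD_tendsto by fastforce
  moreover have "((\<lambda>x. poly Q (of_real x)) \<longlongrightarrow> poly Q (of_real r)) (at r)"
    by (intro tendsto_eq_intros) auto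
  ultimately have "poly Q (of_real r) = 0"
    using tendsto_unique trivial_limit_at by blast
  with \<open>poly Q (of_real r) \<noteq> 0\<close> show False by contradiction
qed

lemma degree_le_of_bigo:
  fixes P :: "'a::real_normed_field poly"
  assumes "P \<noteq> 0" and bound: "(\<lambda>x. poly P (of_real x)) \<in> O[at_top](\<lambda>x. of_real x ^ k)"
  shows "degree P \<le> k"
proof (rule ccontr)
  define n where "n = degree P"
  assume "\<not> degree P \<le> k"
  then have "k < n" by (simp add: n_def)
  have "(\<lambda>x. (of_real x :: 'a) ^ k) \<in> o[at_top](\<lambda>x. of_real x ^ n)"
  proof -
    have "(\<lambda>x::real. \<bar>x\<bar> ^ k) \<in> o[at_top](\<lambda>x. \<bar>x\<bar> ^ n)"
      using \<open>k < n\<close> by real_asymp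
    then show ?thesis
      by (subst landau_o.small.norm_iff[symmetric]) (simp add: norm_power)
  qed
  with bound have "(\<lambda>x. poly P (of_real x)) \<in> o[at_top](\<lambda>x. of_real x ^ n)"
    by (rule landau_o.big_small_trans)
  then have "((\<lambda>x. poly P (of_real x) / of_real x ^ n) \<longlongrightarrow> 0) at_top"
    by (rule smalloD_tendsto)
  moreover have "((\<lambda>x. poly P (of_real x) / of_real x ^ n) \<longlongrightarrow> lead_coeff P) at_top"
    using filterlim_compose[OF poly_divide_tendsto_aux[of P] filterlim_of_real_at_infinity]
    by (simp add: n_def)
  ultimately have "lead_coeff P = 0"
    using tendsto_unique trivial_limit_at_top_linorder by blast
  with assms(1) show False by simp
qed

section \<open>The elimination polynomial\<close>

definition target_sum :: "nat \<Rightarrow> real \<Rightarrow> real \<Rightarrow> real" where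
  "target_sum N \<kappa> R = real N * R\<^sup>2 / \<kappa> - real N * R"

text \<open>Using \<open>csqrt\<close> makes the branches total: for \<open>R\<^sup>2 < \<omega> i\<^sup>2\<close> they are imaginary, and such \<open>R\<close>
  carry no real solution.\<close>
definition root_branch :: "(nat \<Rightarrow> real) \<Rightarrow> nat \<Rightarrow> real \<Rightarrow> complex" where
  "root_branch \<omega> i R = csqrt (of_real (R\<^sup>2 - (\<omega> i)\<^sup>2))"

definition branch_equation :: "nat \<Rightarrow> real \<Rightarrow> (nat \<Rightarrow> real) \<Rightarrow> nat set \<Rightarrow> real \<Rightarrow> complex" where
  "branch_equation N \<kappa> \<omega> T R =
     of_real (target_sum N \<kappa> R) - (\<Sum>i<N. pattern_sign T i * root_branch \<omega> i R)"

lemma target_sum_eq_poly: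
  "(\<lambda>R. of_real (target_sum N \<kappa> R) :: complex) =
     (\<lambda>R. poly [:0, - of_real (real N), of_real (real N / \<kappa>):] (of_real R))"
  by (simp add: fun_eq_iff target_sum_def power2_eq_square field_simps)

lemma root_branch_squared_eq_poly:
  "(root_branch \<omega> i)\<^sup>2 = (\<lambda>R. poly [:- of_real ((\<omega> i)\<^sup>2), 0, 1:] (of_real R))"
proof -
  have "(root_branch \<omega> i)\<^sup>2 = (\<lambda>R. (root_branch \<omega> i R)\<^sup>2)"
    by (simp add: power2_eq_square times_fun_def)
  also have "\<dots> = (\<lambda>R. of_real (R\<^sup>2 - (\<omega> i)\<^sup>2))"
    by (simp only: root_branch_def power2_csqrt)
  also have "\<dots> = (\<lambda>R. poly [:- of_real ((\<omega> i)\<^sup>2), 0, 1:] (of_real R))"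
    by (simp add: fun_eq_iff power2_eq_square)
  finally show ?thesis .
qed

lemma elimination_poly_exists:
  "\<exists>P. \<forall>R. poly P (of_real R) = (\<Prod>T\<in>Pow {..<N}. branch_equation N \<kappa> \<omega> T R)"
proof -
  have "(\<lambda>R. of_real (target_sum N \<kappa> R)) \<in> (poly_functions :: (real \<Rightarrow> complex) set)"
    unfolding poly_functions_def target_sum_eq_poly by (rule rangeI)
  moreover have "(root_branch \<omega> i)\<^sup>2 \<in> poly_functions" for i
    unfolding poly_functions_def root_branch_squared_eq_poly by (rule rangeI)
  ultimately have "(\<Prod>T\<in>Pow {..<N}. (\<lambda>R. of_real (target_sum N \<kappa> R))
      - (\<Sum>i<N. pattern_sign T i * root_branch \<omega> i)) \<in> poly_functions"
    by (intro sign_product_closed ring_closed_poly_functions) auto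
  then show ?thesis
    by (auto simp: poly_functions_def fun_eq_iff prod_fun_apply sum_fun_apply pattern_sign_fun_apply
        branch_equation_def)
qed

lemma target_sum_bigtheta:
  assumes "N \<ge> 1" "\<kappa> \<noteq> 0"
  shows "(\<lambda>R. of_real (target_sum N \<kappa> R) :: complex) \<in> \<Theta>[at_top](\<lambda>R. of_real R ^ 2)"
proof -
  have "(\<lambda>R. real N * R) \<in> o[at_top](\<lambda>R. real N / \<kappa> * R\<^sup>2)"
    using assms by simp real_asymp
  then have "\<Theta>[at_top](\<lambda>R. real N / \<kappa> * R\<^sup>2 - real N * R) = \<Theta>[at_top](\<lambda>R. real N / \<kappa> * R\<^sup>2)"
    by (rule landau_theta.diff_absorb2)
  also have "\<dots> = \<Theta>[at_top](\<lambda>R. R\<^sup>2)"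
    using assms by simp
  finally have theta: "\<Theta>[at_top](\<lambda>R. real N / \<kappa> * R\<^sup>2 - real N * R) = \<Theta>[at_top](\<lambda>R. R\<^sup>2)" .
  have "target_sum N \<kappa> = (\<lambda>R. real N / \<kappa> * R\<^sup>2 - real N * R)"
    by (simp add: fun_eq_iff target_sum_def)
  then have "target_sum N \<kappa> \<in> \<Theta>[at_top](\<lambda>R. R\<^sup>2)"
    using theta bigtheta_refl by metis
  then show ?thesis
    by (subst landau_theta.norm_iff[symmetric]) (simp add: norm_power)
qed

lemma root_branch_smallo: "root_branch \<omega> i \<in> o[at_top](\<lambda>R. of_real R ^ 2)"
proof -
  have "(\<lambda>R. sqrt \<bar>R\<^sup>2 - (\<omega> i)\<^sup>2\<bar>) \<in> o[at_top](\<lambda>R. \<bar>R\<bar> ^ 2)"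
    by real_asymp
  moreover have "(\<lambda>R. norm (root_branch \<omega> i R)) = (\<lambda>R. sqrt \<bar>R\<^sup>2 - (\<omega> i)\<^sup>2\<bar>)"
    by (simp only: root_branch_def norm_csqrt norm_of_real)
  ultimately show ?thesis
    by (subst landau_o.small.norm_iff[symmetric]) (simp add: norm_power)
qed

lemma branch_equation_bigtheta:
  assumes "N \<ge> 1" "\<kappa> \<noteq> 0"
  shows "branch_equation N \<kappa> \<omega> T \<in> \<Theta>[at_top](\<lambda>R. of_real R ^ 2)"
proof -
  note target = target_sum_bigtheta[OF assms]
  have "(\<lambda>R. \<Sum>i<N. pattern_sign T i * root_branch \<omega> i R) \<in> o[at_top](\<lambda>R. of_real R ^ 2)"
    using root_branch_smallo by (intro big_sum_in_smallo) simp
  then have "\<Theta>[at_top](branch_equation N \<kappa> \<omega> T) = \<Theta>[at_top](\<lambda>R. of_real (target_sum N \<kappa> R))"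
    unfolding branch_equation_def landau_o.small.cong_bigtheta[OF target, symmetric]
    by (rule landau_theta.diff_absorb2)
  also have "\<dots> = \<Theta>[at_top](\<lambda>R. of_real R ^ 2)"
    by (rule landau_theta.cong_bigtheta[OF target])
  finally show ?thesis
    using bigtheta_refl by blast
qed

lemma elimination_poly:
  assumes "N \<ge> 1" "\<kappa> \<noteq> 0"
  obtains P where "P \<noteq> 0" "degree P \<le> 2 ^ (N + 1)"
    "\<And>R. poly P (of_real R) = (\<Prod>T\<in>Pow {..<N}. branch_equation N \<kappa> \<omega> T R)"
proof -
  obtain P where P: "\<And>R. poly P (of_real R) = (\<Prod>T\<in>Pow {..<N}. branch_equation N \<kappa> \<omega> T R)"
    using elimination_poly_exists by blast
  have "(\<lambda>R. \<Prod>T\<in>Pow {..<N}. branch_equation N \<kappa> \<omega> T R) \<in> \<Theta>[at_top](\<lambda>R. \<Prod>T\<in>Pow {..<N}. of_real R ^ 2)"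
    using branch_equation_bigtheta[OF assms]
    by (intro bigthetaI landau_o.big_prod landau_omega.big_prod) (auto dest: bigthetaD1 bigthetaD2)
  then have theta: "(\<lambda>R. poly P (of_real R)) \<in> \<Theta>[at_top](\<lambda>R. of_real R ^ 2 ^ (N + 1))"
    by (simp add: P card_Pow power_mult flip: power_Suc2)
  have "\<forall>\<^sub>F R in at_top. (of_real R :: complex) ^ 2 ^ (N + 1) \<noteq> 0"
    using eventually_gt_at_top[of 0] by eventually_elim simp
  then have "\<forall>\<^sub>F R in at_top. poly P (of_real R) \<noteq> 0"
    using eventually_nonzero_bigtheta[OF theta] by blast
  then have "P \<noteq> 0"
    using eventually_happens'[OF trivial_limit_at_top_linorder] by fastforce
  moreover have "degree P \<le> 2 ^ (N + 1)"
    using \<open>P \<noteq> 0\<close> bigthetaD1[OF theta] by (rule degree_le_of_bigo)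
  ultimately show ?thesis
    using P that by blast
qed

section \<open>Counting the reduced solutions\<close>

definition reduced_solutions :: "nat \<Rightarrow> real \<Rightarrow> (nat \<Rightarrow> real) \<Rightarrow> real \<Rightarrow> (nat \<Rightarrow> real) set" where
  "reduced_solutions N \<kappa> \<omega> R = {d. (\<forall>i\<ge>N. d i = 0) \<and> (\<forall>i<N. (d i)\<^sup>2 = R\<^sup>2 - (\<omega> i)\<^sup>2) \<and>
     (\<Sum>i<N. d i) = target_sum N \<kappa> R}"

definition regular_indices :: "nat \<Rightarrow> (nat \<Rightarrow> real) \<Rightarrow> real \<Rightarrow> nat set" where
  "regular_indices N \<omega> R = {i. i < N \<and> (\<omega> i)\<^sup>2 < R\<^sup>2}"

lemma reduced_solutions_sign_inj:
  "inj_on (\<lambda>d. {i \<in> regular_indices N \<omega> R. d i < 0}) (reduced_solutions N \<kappa> \<omega> R)"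
proof (rule inj_onI, rule ext)
  fix d d' i
  assume d: "d \<in> reduced_solutions N \<kappa> \<omega> R" and d': "d' \<in> reduced_solutions N \<kappa> \<omega> R"
    and signs: "{i \<in> regular_indices N \<omega> R. d i < 0} = {i \<in> regular_indices N \<omega> R. d' i < 0}"
  show "d i = d' i"
  proof (cases "i < N")
    case True
    then have sq: "(d i)\<^sup>2 = (d' i)\<^sup>2" "(d i)\<^sup>2 = R\<^sup>2 - (\<omega> i)\<^sup>2"
      using d d' by (auto simp: reduced_solutions_def)
    show ?thesis
    proof (cases "(\<omega> i)\<^sup>2 < R\<^sup>2")
      case True
      then have "d i < 0 \<longleftrightarrow> d' i < 0"
        using signs \<open>i < N\<close> by (auto simp: regular_indices_def)
      moreover have "d i = d' i \<or> d i = - d' i"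
        using sq(1) by (simp add: power2_eq_iff)
      ultimately show ?thesis by linarith
    next
      case False
      then have "(d i)\<^sup>2 \<le> 0" using sq(2) by simp
      then show ?thesis using sq(1) by (simp add: power2_eq_iff)
    qed
  qed (use d d' in \<open>simp add: reduced_solutions_def\<close>)
qed

lemma prod_Pow_Un:
  assumes "A \<inter> B = {}"
  shows "(\<Prod>T\<in>Pow (A \<union> B). f T) = (\<Prod>T1\<in>Pow A. \<Prod>T2\<in>Pow B. f (T1 \<union> T2))"
proof -
  have "(\<Prod>T1\<in>Pow A. \<Prod>T2\<in>Pow B. f (T1 \<union> T2)) = (\<Prod>p\<in>Pow A \<times> Pow B. f (fst p \<union> snd p))"
    by (simp add: prod.cartesian_product case_prod_beta)
  also have "\<dots> = (\<Prod>T\<in>Pow (A \<union> B). f T)"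
    using assms by (intro prod.reindex_bij_witness[of _ "\<lambda>T. (T \<inter> A, T \<inter> B)" "\<lambda>p. fst p \<union> snd p"]) auto
  finally show ?thesis ..
qed

definition branch_cluster ::
    "nat \<Rightarrow> real \<Rightarrow> (nat \<Rightarrow> real) \<Rightarrow> nat set \<Rightarrow> nat set \<Rightarrow> nat set \<Rightarrow> real \<Rightarrow> complex" where
  "branch_cluster N \<kappa> \<omega> W Z T1 =
     (\<Prod>T2\<in>Pow Z. ((\<lambda>R. of_real (target_sum N \<kappa> R)) - (\<Sum>i\<in>W. pattern_sign T1 i * root_branch \<omega> i))
        - (\<Sum>i\<in>Z. pattern_sign T2 i * root_branch \<omega> i))"

lemma prod_branch_equation_split:
  assumes "W \<union> Z = {..<N}" "W \<inter> Z = {}"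
  shows "(\<Prod>T\<in>Pow {..<N}. branch_equation N \<kappa> \<omega> T R) = (\<Prod>T1\<in>Pow W. branch_cluster N \<kappa> \<omega> W Z T1 R)"
proof -
  have fin: "finite W" "finite Z"
    using assms(1) by (metis finite_Un finite_lessThan)+
  have "branch_equation N \<kappa> \<omega> (T1 \<union> T2) R = of_real (target_sum N \<kappa> R)
      - (\<Sum>i\<in>W. pattern_sign T1 i * root_branch \<omega> i R) - (\<Sum>i\<in>Z. pattern_sign T2 i * root_branch \<omega> i R)"
    if "T1 \<subseteq> W" "T2 \<subseteq> Z" for T1 T2
  proof -
    have "(\<Sum>i\<in>W. pattern_sign (T1 \<union> T2) i * root_branch \<omega> i R) = (\<Sum>i\<in>W. pattern_sign T1 i * root_branch \<omega> i R)"
      "(\<Sum>i\<in>Z. pattern_sign (T1 \<union> T2) i * root_branch \<omega> i R) = (\<Sum>i\<in>Z. pattern_sign T2 i * root_branch \<omega> i R)"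
      using that assms(2) by (auto intro!: sum.cong simp: pattern_sign_def)
    then show ?thesis
      unfolding branch_equation_def assms(1)[symmetric] sum.union_disjoint[OF fin assms(2)] by simp
  qed
  then show ?thesis
    unfolding assms(1)[symmetric] prod_Pow_Un[OF assms(2)] branch_cluster_def
    by (intro prod.cong refl) (auto simp: prod_fun_apply sum_fun_apply pattern_sign_fun_apply)
qed

lemma lipschitz_at_branch_cluster:
  assumes "W \<subseteq> regular_indices N \<omega> r" "finite Z"
  shows "lipschitz_at r (branch_cluster N \<kappa> \<omega> W Z T1)"
proof -
  note C = ring_closed_lipschitz_at[of r]
  have "lipschitz_at r (root_branch \<omega> i)" if "i \<in> W" for i
    using that assms(1) lipschitz_at_csqrt[of "\<omega> i" r] by (auto simp: regular_indices_def root_branch_def[abs_def])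
  moreover have "lipschitz_at r (\<lambda>R. of_real (target_sum N \<kappa> R) :: complex)"
    unfolding target_sum_eq_poly by (rule lipschitz_at_poly)
  ultimately have "(\<lambda>R. of_real (target_sum N \<kappa> R)) - (\<Sum>i\<in>W. pattern_sign T1 i * root_branch \<omega> i)
      \<in> {f. lipschitz_at r f}"
    by (intro ring_closed_diff[OF C] ring_closed_sum[OF C] ring_closed_mult[OF C] ring_closed_pattern_sign[OF C])
      simp_all
  moreover have "(root_branch \<omega> i)\<^sup>2 \<in> {f. lipschitz_at r f}" for i
    unfolding root_branch_squared_eq_poly by (simp only: mem_Collect_eq lipschitz_at_poly)
  ultimately show ?thesis
    unfolding branch_cluster_def using sign_product_closed[OF C assms(2)] by blast
qed

lemma branch_cluster_vanishes:
  assumes "d \<in> reduced_solutions N \<kappa> \<omega> r"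
  shows "branch_cluster N \<kappa> \<omega> (regular_indices N \<omega> r) ({..<N} - regular_indices N \<omega> r)
           {i \<in> regular_indices N \<omega> r. d i < 0} r = 0"
proof -
  define W where "W = regular_indices N \<omega> r"
  define Z where "Z = {..<N} - W"
  have WZ: "W \<union> Z = {..<N}" "W \<inter> Z = {}" "finite W" "finite Z"
    by (auto simp: W_def Z_def regular_indices_def)
  have sq: "(d i)\<^sup>2 = r\<^sup>2 - (\<omega> i)\<^sup>2" if "i < N" for i
    using assms that by (simp add: reduced_solutions_def)
  have "(d i)\<^sup>2 = 0 \<and> r\<^sup>2 - (\<omega> i)\<^sup>2 = 0" if "i \<in> Z" for i
    using sq[of i] zero_le_power2[of "d i"] that unfolding Z_def W_def regular_indices_def by fastforce
  then have root_Z: "root_branch \<omega> i r = 0" and d_Z: "d i = 0" if "i \<in> Z" for i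
    using that by (simp_all add: root_branch_def)
  have root_W: "pattern_sign {i \<in> W. d i < 0} i * root_branch \<omega> i r = of_real (d i)" if "i \<in> W" for i
  proof -
    have "i < N" using that by (simp add: W_def regular_indices_def)
    then have "root_branch \<omega> i r = csqrt (of_real ((d i)\<^sup>2))"
      by (simp only: root_branch_def sq)
    also have "\<dots> = of_real \<bar>d i\<bar>"
      by (subst of_real_sqrt[symmetric]) simp_all
    finally show ?thesis
      using that by (auto simp: pattern_sign_def)
  qed
  have "(\<Sum>i<N. d i) = (\<Sum>i\<in>W. d i)"
    unfolding WZ(1)[symmetric] sum.union_disjoint[OF WZ(3,4,2)] by (simp add: d_Z)
  then have "of_real (target_sum N \<kappa> r) - (\<Sum>i\<in>W. pattern_sign {i \<in> W. d i < 0} i * root_branch \<omega> i r) = 0"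
    using assms root_W by (simp add: reduced_solutions_def flip: of_real_sum)
  then show ?thesis
    unfolding W_def[symmetric] Z_def[symmetric] branch_cluster_def
    using WZ(4) by (simp add: prod_fun_apply sum_fun_apply pattern_sign_fun_apply root_Z card_Pow)
qed

lemma card_reduced_solutions_le_order:
  assumes P: "\<And>R. poly P (of_real R) = (\<Prod>T\<in>Pow {..<N}. branch_equation N \<kappa> \<omega> T R)"
    and "P \<noteq> 0"
  shows "finite (reduced_solutions N \<kappa> \<omega> r) \<and> card (reduced_solutions N \<kappa> \<omega> r) \<le> order (of_real r) P"
proof -
  define W where "W = regular_indices N \<omega> r"
  define Z where "Z = {..<N} - W"
  define sign_set where "sign_set d = {i \<in> W. d i < 0}" for d :: "nat \<Rightarrow> real"
  define A where "A = sign_set ` reduced_solutions N \<kappa> \<omega> r"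
  have WZ: "W \<union> Z = {..<N}" "W \<inter> Z = {}" "finite W" "finite Z"
    by (auto simp: W_def Z_def regular_indices_def)
  have inj: "inj_on sign_set (reduced_solutions N \<kappa> \<omega> r)"
    unfolding sign_set_def W_def by (rule reduced_solutions_sign_inj)
  have "A \<subseteq> Pow W"
    by (auto simp: A_def sign_set_def)
  then have "finite A"
    using WZ(3) by (simp add: finite_subset)
  then have fin: "finite (reduced_solutions N \<kappa> \<omega> r)" and card: "card (reduced_solutions N \<kappa> \<omega> r) = card A"
    using inj by (auto simp: A_def card_image dest: finite_imageD)
  have lip: "lipschitz_at r (branch_cluster N \<kappa> \<omega> W Z T1)" for T1
    using WZ(4) by (intro lipschitz_at_branch_cluster) (simp_all add: W_def)
  have "branch_cluster N \<kappa> \<omega> W Z T1 \<in> O[at r](\<lambda>R. if T1 \<in> A then of_real (R - r) else 1)" for T1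
  proof (cases "T1 \<in> A")
    case True
    then obtain d where "d \<in> reduced_solutions N \<kappa> \<omega> r" "T1 = sign_set d"
      by (auto simp: A_def)
    then have "branch_cluster N \<kappa> \<omega> W Z T1 r = 0"
      using branch_cluster_vanishes by (simp add: W_def Z_def sign_set_def)
    with True show ?thesis
      using lipschitz_at_bigo_zero[OF lip] by (simp only: if_True)
  next
    case False
    then show ?thesis
      using lipschitz_at_bigo_1[OF lip] by (simp only: if_False)
  qed
  then have "(\<lambda>R. poly P (of_real R)) \<in> O[at r](\<lambda>R. \<Prod>T1\<in>Pow W. if T1 \<in> A then of_real (R - r) else 1)"
    unfolding P prod_branch_equation_split[OF WZ(1,2)] by (rule landau_o.big_prod)
  also have "(\<lambda>R. \<Prod>T1\<in>Pow W. if T1 \<in> A then of_real (R - r) else 1) = (\<lambda>R. of_real (R - r) ^ card A)"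
    using \<open>A \<subseteq> Pow W\<close> WZ(3) by (simp add: prod.If_cases Int_absorb1)
  finally have "card A \<le> order (of_real r) P"
    by (rule order_ge_of_bigo[OF \<open>P \<noteq> 0\<close>])
  with fin card show ?thesis
    by simp
qed

lemma finite_card_Sigma_reduced_solutions:
  assumes "N \<ge> 1" "\<kappa> \<noteq> 0"
  shows "finite (SIGMA R:UNIV. reduced_solutions N \<kappa> \<omega> R) \<and>
    card (SIGMA R:UNIV. reduced_solutions N \<kappa> \<omega> R) \<le> 2 ^ (N + 1)"
proof -
  obtain P where "P \<noteq> 0" and deg: "degree P \<le> 2 ^ (N + 1)"
    and P: "\<And>R. poly P (of_real R) = (\<Prod>T\<in>Pow {..<N}. branch_equation N \<kappa> \<omega> T R)"
    using elimination_poly[OF assms] by blast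
  note fibres = card_reduced_solutions_le_order[OF P \<open>P \<noteq> 0\<close>]
  define Rs where "Rs = {R. reduced_solutions N \<kappa> \<omega> R \<noteq> {}}"
  have "poly P (of_real R) = 0" if "R \<in> Rs" for R
  proof -
    have "order (of_real R) P \<noteq> 0"
      using fibres[of R] that by (auto simp: Rs_def)
    then show ?thesis by (simp add: order_root)
  qed
  then have "of_real ` Rs \<subseteq> {r. poly P r = 0}" by auto
  then have "finite (of_real ` Rs :: complex set)"
    using poly_roots_finite[OF \<open>P \<noteq> 0\<close>] by (rule finite_subset)
  then have "finite Rs"
    by (rule finite_imageD) (simp add: inj_on_def)
  have Sigma: "(SIGMA R:UNIV. reduced_solutions N \<kappa> \<omega> R) = (SIGMA R:Rs. reduced_solutions N \<kappa> \<omega> R)"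
    by (auto simp: Rs_def)
  have "card (SIGMA R:Rs. reduced_solutions N \<kappa> \<omega> R) = (\<Sum>R\<in>Rs. card (reduced_solutions N \<kappa> \<omega> R))"
    using \<open>finite Rs\<close> fibres by (intro card_SigmaI) auto
  also have "\<dots> \<le> (\<Sum>R\<in>Rs. order (of_real R) P)"
    using fibres by (intro sum_mono) auto
  also have "\<dots> = (\<Sum>r\<in>of_real ` Rs. order r P)"
    by (subst sum.reindex) (auto simp: inj_on_def)
  also have "\<dots> \<le> (\<Sum>r | poly P r = 0. order r P)"
    using \<open>of_real ` Rs \<subseteq> {r. poly P r = 0}\<close> poly_roots_finite[OF \<open>P \<noteq> 0\<close>]
    by (intro sum_mono2) auto
  also have "\<dots> \<le> degree P"
    using \<open>P \<noteq> 0\<close> by (rule sum_order_le_degree)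
  finally show ?thesis
    using deg \<open>finite Rs\<close> fibres Sigma by auto
qed

section \<open>Equilibria\<close>

definition coupling_radius :: "nat \<Rightarrow> real \<Rightarrow> (nat \<Rightarrow> real) \<Rightarrow> real" where
  "coupling_radius N \<kappa> \<theta> = \<kappa> / real N * (\<Sum>j<N. 1 + cos (\<theta> j))"

definition reduce :: "nat \<Rightarrow> real \<Rightarrow> (nat \<Rightarrow> real) \<Rightarrow> real \<times> (nat \<Rightarrow> real)" where
  "reduce N \<kappa> \<theta> = (coupling_radius N \<kappa> \<theta>, \<lambda>i. if i < N then coupling_radius N \<kappa> \<theta> * cos (\<theta> i) else 0)"

lemma equilibrium_iff_sin:
  "is_equilibrium N \<omega> \<kappa> \<theta> \<longleftrightarrow> (\<forall>i<N. \<omega> i = coupling_radius N \<kappa> \<theta> * sin (\<theta> i))"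
  by (simp add: is_equilibrium_def rhs_def coupling_radius_def)

lemma reduce_in_reduced_solutions:
  assumes "N \<ge> 1" "\<kappa> \<noteq> 0" "is_equilibrium N \<omega> \<kappa> \<theta>"
  shows "reduce N \<kappa> \<theta> \<in> (SIGMA R:UNIV. reduced_solutions N \<kappa> \<omega> R)"
proof -
  define R where "R = coupling_radius N \<kappa> \<theta>"
  have "(R * cos (\<theta> i))\<^sup>2 = R\<^sup>2 - (\<omega> i)\<^sup>2" if "i < N" for i
    using assms(3) that by (simp add: equilibrium_iff_sin R_def power_mult_distrib cos_squared_eq algebra_simps)
  moreover have "(\<Sum>i<N. R * cos (\<theta> i)) = target_sum N \<kappa> R"
  proof -
    have "(\<Sum>j<N. 1 + cos (\<theta> j)) = real N * R / \<kappa>"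
      using assms(1,2) by (simp add: R_def coupling_radius_def)
    then have "(\<Sum>j<N. cos (\<theta> j)) = real N * R / \<kappa> - real N"
      by (simp add: sum.distrib)
    then have "(\<Sum>i<N. R * cos (\<theta> i)) = R * (real N * R / \<kappa> - real N)"
      by (metis sum_distrib_left)
    then show ?thesis
      by (simp add: target_sum_def power2_eq_square algebra_simps)
  qed
  ultimately show ?thesis
    by (simp add: reduce_def reduced_solutions_def R_def)
qed

lemma cong_2pi_of_sin_cos:
  fixes x y :: real
  assumes "sin x = sin y" "cos x = cos y"
  shows "\<exists>k::int. x - y = 2 * pi * of_int k"
proof -
  have "cos (x - y) = 1"
    using assms by (simp add: cos_diff flip: power2_eq_square)
  then show ?thesis
    by (auto simp: cos_one_2pi_int)
qed

lemma reduce_eq_imp_cong_2pi: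
  assumes "N \<ge> 1" "\<kappa> \<noteq> 0" "is_equilibrium N \<omega> \<kappa> \<theta>" "is_equilibrium N \<omega> \<kappa> \<phi>"
    and "reduce N \<kappa> \<theta> = reduce N \<kappa> \<phi>"
  shows "cong_2pi N \<theta> \<phi>"
  unfolding cong_2pi_def
proof (intro allI impI)
  fix i assume "i < N"
  define R where "R = coupling_radius N \<kappa> \<theta>"
  have R: "coupling_radius N \<kappa> \<phi> = R" and cos: "R * cos (\<theta> i) = R * cos (\<phi> i)"
    using assms(5) \<open>i < N\<close> by (auto simp: reduce_def R_def dest: fun_cong[of _ _ i])
  have "sin (\<theta> i) = sin (\<phi> i) \<and> cos (\<theta> i) = cos (\<phi> i)"
  proof (cases "R = 0")
    case True
    have "cos (\<psi> i) = -1" if "coupling_radius N \<kappa> \<psi> = 0" for \<psi>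
    proof -
      have "(\<Sum>j<N. 1 + cos (\<psi> j)) = 0"
        using that assms(1,2) by (simp add: coupling_radius_def)
      moreover have "0 \<le> 1 + cos (\<psi> j)" for j
        using cos_ge_minus_one[of "\<psi> j"] by linarith
      ultimately have "1 + cos (\<psi> i) = 0"
        using \<open>i < N\<close> by (subst (asm) sum_nonneg_eq_0_iff) auto
      then show ?thesis by simp
    qed
    then have "cos (\<theta> i) = -1" "cos (\<phi> i) = -1"
      using True R by (auto simp: R_def)
    moreover have "sin x = 0" if "cos x = -1" for x :: real
      using that sin_squared_eq[of x] by simp
    ultimately show ?thesis by simp
  next
    case False
    have "R * sin (\<theta> i) = R * sin (\<phi> i)"
      using assms(3,4) R \<open>i < N\<close> by (simp add: equilibrium_iff_sin R_def)
    then show ?thesis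
      using cos False by simp
  qed
  then show "\<exists>k::int. \<theta> i - \<phi> i = 2 * pi * of_int k"
    by (intro cong_2pi_of_sin_cos) auto
qed

theorem theorem2p22:
  fixes N :: nat and \<omega> :: "nat \<Rightarrow> real" and \<kappa> :: real and S :: "(nat \<Rightarrow> real) set"
  assumes "N \<ge> 1" and "\<kappa> \<noteq> 0"
    and "\<And>\<theta>. \<theta> \<in> S \<Longrightarrow> is_equilibrium N \<omega> \<kappa> \<theta>"
    and "\<And>\<theta> \<phi>. \<theta> \<in> S \<Longrightarrow> \<phi> \<in> S \<Longrightarrow> \<theta> \<noteq> \<phi> \<Longrightarrow> \<not> cong_2pi N \<theta> \<phi>"
  shows "finite S \<and> card S \<le> 2 ^ (N + 1)"
proof -
  have inj: "inj_on (reduce N \<kappa>) S"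
    using assms reduce_eq_imp_cong_2pi by (meson inj_onI)
  have sub: "reduce N \<kappa> ` S \<subseteq> (SIGMA R:UNIV. reduced_solutions N \<kappa> \<omega> R)"
    using assms(1-3) reduce_in_reduced_solutions by blast
  note total = finite_card_Sigma_reduced_solutions[OF assms(1,2), of \<omega>]
  have "finite S"
    using finite_subset[OF sub] total inj finite_imageD by blast
  moreover have "card S \<le> 2 ^ (N + 1)"
    using card_image[OF inj] card_mono[OF _ sub] total by simp
  ultimately show ?thesis ..
qed

end
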